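(* For every integer $n\ge 0$, the path $P_{n+2}$ on $n+2$ vertices belongs to ${\bf Forb}(\Gamma_{\le n})$; that is, $\gamma(P_{n+2})=n+1$ and $\gamma(P_{n+2}\setminus v)<\gamma(P_{n+2})$ for every vertex $v$.
   Context: For a finite graph $G$ and indeterminates $X_G=\{x_u : u\in V(G)\}$, the generalized Laplacian matrix $L(G,X_G)$ is the $V(G)\times V(G)$ matrix over $\mathbb{Z}[X_G]$ with $(u,u)$-entry $x_u$ and $(u,v)$-entry $-m_{uv}$ for $u\ne v$, $m_{uv}$ being the number of edges between $u$ and $v$. The $i$-th critical ideal $I_i(G,X_G)$ is the ideal of $\mathbb{Z}[X_G]$ generated by all $i\times i$ minors of $L(G,X_G)$ (with $I_i=\langle1\rangle$ for $i<1$, $I_i=\langle 0\rangle$ for $i>|V(G)|$). The algebraic co-rank $\gamma(G)$ is the number of critical ideals of $G$ equal to $\langle 1\rangle$. $\Gamma_{\le k}$ is the set of simple connected graphs with $\gamma\le k$; ${\bf Forb}(\Gamma_{\le k})$ is the set of minimal (under induced subgraphs) simple connected graphs $G$ with $\gamma(G)\ge k+1$, equivalently the simple connected graphs $G$ with $\gamma(G)=k+1$ and $\gamma(G\setminus v)<\gamma(G)$ for all vertices $v$. *)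

theory Defs
  imports "HOL-Library.Poly_Mapping" "Jordan_Normal_Form.Determinant"
begin

(* Multivariate integer polynomials Z[x_0, x_1, ...]: monomials are finitely supported
  exponent vectors nat =>0 nat, polynomials are finitely supported coefficient maps. *)
type_synonym ipoly = "(nat \<Rightarrow>\<^sub>0 nat) \<Rightarrow>\<^sub>0 int"

definition var :: "nat \<Rightarrow> ipoly" where
  "var u = Poly_Mapping.single (Poly_Mapping.single u 1) 1"

(* A simple graph on a finite vertex set V \<subseteq> nat, given by a symmetric irreflexive
  adjacency relation E (only its restriction to V matters). *)
definition gen_laplacian :: "(nat \<Rightarrow> nat \<Rightarrow> bool) \<Rightarrow> nat \<Rightarrow> nat \<Rightarrow> ipoly" where
  "gen_laplacian E u v = (if u = v then var u else if E u v then -1 else 0)"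

definition minor :: "(nat \<Rightarrow> nat \<Rightarrow> ipoly) \<Rightarrow> nat set \<Rightarrow> nat set \<Rightarrow> ipoly" where
  "minor M R C = det (mat (card R) (card C)
      (\<lambda>(k, l). M (sorted_list_of_set R ! k) (sorted_list_of_set C ! l)))"

definition gen_ideal :: "'a::comm_ring_1 set \<Rightarrow> 'a set" where
  "gen_ideal S = {x. \<exists>F f. finite F \<and> F \<subseteq> S \<and> x = (\<Sum>s\<in>F. f s * s)}"

definition crit_ideal :: "nat set \<Rightarrow> (nat \<Rightarrow> nat \<Rightarrow> bool) \<Rightarrow> nat \<Rightarrow> ipoly set" where
  "crit_ideal V E i = gen_ideal {minor (gen_laplacian E) R C | R C.
      R \<subseteq> V \<and> C \<subseteq> V \<and> card R = i \<and> card C = i}"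

definition gamma :: "nat set \<Rightarrow> (nat \<Rightarrow> nat \<Rightarrow> bool) \<Rightarrow> nat" where
  "gamma V E = card {i \<in> {1..card V}. crit_ideal V E i = UNIV}"

definition path_adj :: "nat \<Rightarrow> nat \<Rightarrow> bool" where
  "path_adj u v \<longleftrightarrow> u + 1 = v \<or> v + 1 = u"

definition path_vertices :: "nat \<Rightarrow> nat set" where
  "path_vertices m = {0..<m}"

end

theory Submission
  imports Defs "Jordan_Normal_Form.Char_Poly"
begin

text \<open>For \<open>1 \<le> i < m\<close> the \<open>i \<times> i\<close> minor of \<open>L(P\<^sub>m)\<close> on rows \<open>0..i-1\<close> and columns
  \<open>1..i\<close> is lower triangular with diagonal \<open>-1\<close>, hence equals \<open>\<plusminus>1\<close>, so \<open>I\<^sub>i = \<langle>1\<rangle>\<close>. Conversely, for any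
  graph on \<open>k \<ge> 1\<close> vertices, \<open>I\<^sub>k\<close> is generated by \<open>det L(G)\<close>, and sending every variable \<open>x\<^sub>u\<close> to one
  indeterminate \<open>t\<close> maps \<open>det L(G)\<close> to the characteristic polynomial of the adjacency matrix, which
  is monic of degree \<open>k\<close> and thus not a unit. Hence \<open>\<gamma>(G) \<le> |V(G)| - 1\<close> for every nonempty graph,
  with equality for paths; deleting a vertex of \<open>P\<^sub>n\<^sub>+\<^sub>2\<close> leaves \<open>n + 1\<close> vertices and so
  \<open>\<gamma> \<le> n\<close>.\<close>

definition monomial_degree :: "(nat \<Rightarrow>\<^sub>0 nat) \<Rightarrow> nat" where
  "monomial_degree m = (\<Sum>i\<in>Poly_Mapping.keys m. Poly_Mapping.lookup m i)"

lemma monomial_degree_eq_sum: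
  assumes "finite S" "Poly_Mapping.keys m \<subseteq> S"
  shows "monomial_degree m = (\<Sum>i\<in>S. Poly_Mapping.lookup m i)"
  unfolding monomial_degree_def using assms
  by (intro sum.mono_neutral_left) (auto simp: in_keys_iff)

lemma monomial_degree_add: "monomial_degree (a + b) = monomial_degree a + monomial_degree b"
proof -
  let ?S = "Poly_Mapping.keys a \<union> Poly_Mapping.keys b"
  have "monomial_degree (a + b) = (\<Sum>i\<in>?S. Poly_Mapping.lookup (a + b) i)"
    by (intro monomial_degree_eq_sum) (auto simp: keys_add)
  also have "\<dots> = (\<Sum>i\<in>?S. Poly_Mapping.lookup a i) + (\<Sum>i\<in>?S. Poly_Mapping.lookup b i)"
    by (simp add: lookup_add sum.distrib)
  also have "\<dots> = monomial_degree a + monomial_degree b"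
    by (subst (1 2) monomial_degree_eq_sum[of ?S]) auto
  finally show ?thesis .
qed

definition collapse_vars :: "ipoly \<Rightarrow> int poly" where
  "collapse_vars p =
     (\<Sum>m\<in>Poly_Mapping.keys p. monom (Poly_Mapping.lookup p m) (monomial_degree m))"

lemma collapse_vars_eq_sum:
  assumes "finite S" "Poly_Mapping.keys p \<subseteq> S"
  shows "collapse_vars p = (\<Sum>m\<in>S. monom (Poly_Mapping.lookup p m) (monomial_degree m))"
  unfolding collapse_vars_def using assms
  by (intro sum.mono_neutral_left) (auto simp: in_keys_iff)

lemma collapse_vars_add: "collapse_vars (p + q) = collapse_vars p + collapse_vars q"
proof -
  let ?S = "Poly_Mapping.keys p \<union> Poly_Mapping.keys q"
  let ?c = "\<lambda>r m. monom (Poly_Mapping.lookup r m) (monomial_degree m)"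
  have "collapse_vars (p + q) = (\<Sum>m\<in>?S. ?c (p + q) m)"
    by (intro collapse_vars_eq_sum) (auto simp: keys_add)
  also have "\<dots> = (\<Sum>m\<in>?S. ?c p m) + (\<Sum>m\<in>?S. ?c q m)"
    by (simp add: lookup_add sum.distrib add_monom[symmetric])
  also have "\<dots> = collapse_vars p + collapse_vars q"
    by (subst (1 2) collapse_vars_eq_sum[of ?S]) auto
  finally show ?thesis .
qed

lemma collapse_vars_zero: "collapse_vars 0 = 0"
  by (simp add: collapse_vars_def)

lemma collapse_vars_sum: "collapse_vars (sum f A) = (\<Sum>a\<in>A. collapse_vars (f a))"
  by (induction A rule: infinite_finite_induct) (simp_all add: collapse_vars_zero collapse_vars_add)

lemma collapse_vars_single:
  "collapse_vars (Poly_Mapping.single m c) = monom c (monomial_degree m)"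
  by (cases "c = 0") (auto simp: collapse_vars_def)

lemma poly_mapping_eq_sum_single:
  "p = (\<Sum>k\<in>Poly_Mapping.keys p. Poly_Mapping.single k (Poly_Mapping.lookup p k))"
proof (rule poly_mapping_eqI)
  fix x
  show "Poly_Mapping.lookup p x =
      Poly_Mapping.lookup (\<Sum>k\<in>Poly_Mapping.keys p. Poly_Mapping.single k (Poly_Mapping.lookup p k)) x"
    unfolding lookup_sum lookup_single when_def
    by (cases "x \<in> Poly_Mapping.keys p") (auto simp: in_keys_iff)
qed

lemma collapse_vars_mult: "collapse_vars (p * q) = collapse_vars p * collapse_vars q"
proof -
  let ?P = "Poly_Mapping.keys p" and ?Q = "Poly_Mapping.keys q"
  have "p * q = (\<Sum>k\<in>?P. Poly_Mapping.single k (Poly_Mapping.lookup p k)) *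
                (\<Sum>l\<in>?Q. Poly_Mapping.single l (Poly_Mapping.lookup q l))"
    using poly_mapping_eq_sum_single[of p] poly_mapping_eq_sum_single[of q] by simp
  also have "\<dots> = (\<Sum>k\<in>?P. \<Sum>l\<in>?Q.
      Poly_Mapping.single (k + l) (Poly_Mapping.lookup p k * Poly_Mapping.lookup q l))"
    by (simp only: sum_product mult_single)
  finally have "collapse_vars (p * q) = (\<Sum>k\<in>?P. \<Sum>l\<in>?Q.
      monom (Poly_Mapping.lookup p k * Poly_Mapping.lookup q l) (monomial_degree k + monomial_degree l))"
    by (simp only: collapse_vars_sum collapse_vars_single monomial_degree_add)
  also have "\<dots> = collapse_vars p * collapse_vars q"
    by (simp only: collapse_vars_def sum_product mult_monom)
  finally show ?thesis .
qed

lemma collapse_vars_one: "collapse_vars 1 = 1"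
  using collapse_vars_single[of 0 1]
  by (simp add: single_one monomial_degree_def monom_0 one_pCons)

interpretation collapse_vars: comm_ring_hom collapse_vars
  by unfold_locales (simp_all add: collapse_vars_zero collapse_vars_add collapse_vars_mult collapse_vars_one)

lemma collapse_vars_var: "collapse_vars (var u) = [:0, 1:]"
  by (simp add: var_def collapse_vars_single monomial_degree_def monom_altdef)

lemma collapse_vars_det_gen_laplacian:
  assumes "finite V"
  defines "k \<equiv> card V" and "vs \<equiv> sorted_list_of_set V"
  shows "collapse_vars (minor (gen_laplacian E) V V) =
    char_poly (mat k k (\<lambda>(i, j). if i \<noteq> j \<and> E (vs ! i) (vs ! j) then 1 else (0::int)))"
    (is "_ = char_poly ?A")
proof -
  let ?L = "mat k k (\<lambda>(i, j). gen_laplacian E (vs ! i) (vs ! j))"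
  have dist: "distinct vs" and len: "length vs = k"
    using assms by auto
  have "map_mat collapse_vars ?L = char_poly_matrix ?A"
  proof (rule eq_matI)
    fix i j
    assume "i < dim_row (char_poly_matrix ?A)" "j < dim_col (char_poly_matrix ?A)"
    then have "i < k" "j < k"
      by (auto simp: char_poly_matrix_def)
    moreover have "vs ! i \<noteq> vs ! j" if "i \<noteq> j"
      using that dist len \<open>i < k\<close> \<open>j < k\<close> by (simp add: nth_eq_iff_index_eq)
    ultimately show "map_mat collapse_vars ?L $$ (i, j) = char_poly_matrix ?A $$ (i, j)"
      by (auto simp: char_poly_matrix_def gen_laplacian_def collapse_vars_var
          collapse_vars.hom_uminus)
  qed (auto simp: char_poly_matrix_def)
  then have "det (map_mat collapse_vars ?L) = char_poly ?A"
    by (simp add: char_poly_def)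
  then show ?thesis
    unfolding minor_def k_def vs_def by simp
qed

lemma det_gen_laplacian_not_unit:
  assumes "finite V" "V \<noteq> {}"
  shows "\<not> minor (gen_laplacian E) V V dvd 1"
proof
  assume "minor (gen_laplacian E) V V dvd 1"
  then have "collapse_vars (minor (gen_laplacian E) V V) dvd 1"
    by (rule collapse_vars.hom_dvd_1)
  then have "degree (collapse_vars (minor (gen_laplacian E) V V)) = 0"
    by (auto simp: is_unit_poly_iff)
  moreover have "degree (collapse_vars (minor (gen_laplacian E) V V)) = card V"
    unfolding collapse_vars_det_gen_laplacian[OF assms(1)]
    using degree_monic_char_poly[OF mat_carrier] by blast
  ultimately show False
    using assms by simp
qed

lemma gen_ideal_eq_UNIV_if_unit:
  assumes "u \<in> S" "u dvd 1"
  shows "gen_ideal S = UNIV"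
proof -
  obtain w where w: "1 = u * w"
    using assms(2) by (elim dvdE)
  have "x \<in> gen_ideal S" for x
    unfolding gen_ideal_def
  proof (intro CollectI exI conjI)
    show "finite {u}" "{u} \<subseteq> S"
      using assms(1) by simp_all
    show "x = (\<Sum>s\<in>{u}. (x * w) * s)"
      using w by (simp add: mult.assoc mult.commute[of w u])
  qed
  then show ?thesis
    by blast
qed

lemma unit_if_gen_ideal_singleton_eq_UNIV:
  assumes "gen_ideal {d} = UNIV"
  shows "d dvd 1"
proof -
  obtain F f where "F \<subseteq> {d}" "1 = (\<Sum>s\<in>F. f s * s)"
    using assms unfolding gen_ideal_def by blast
  then have "F = {} \<or> F = {d}" "1 = (\<Sum>s\<in>F. f s * s)"
    by auto
  then have "1 = f d * d"
    by auto
  then show ?thesis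
    by (metis dvdI mult.commute)
qed

lemma crit_ideal_card:
  assumes "finite V"
  shows "crit_ideal V E (card V) = gen_ideal {minor (gen_laplacian E) V V}"
proof -
  have "R = V" if "R \<subseteq> V" "card R = card V" for R
    using card_subset_eq[OF assms] that by blast
  then show ?thesis
    unfolding crit_ideal_def by (intro arg_cong[where f = gen_ideal]) blast
qed

lemma crit_ideal_card_ne_UNIV:
  assumes "finite V" "V \<noteq> {}"
  shows "crit_ideal V E (card V) \<noteq> UNIV"
  using det_gen_laplacian_not_unit[OF assms] unit_if_gen_ideal_singleton_eq_UNIV
  by (auto simp: crit_ideal_card[OF assms(1)])

lemma gamma_less_card:
  assumes "finite V" "V \<noteq> {}"
  shows "gamma V E < card V"
proof -
  have "{i \<in> {1..card V}. crit_ideal V E i = UNIV} \<subseteq> {1..<card V}"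
    using crit_ideal_card_ne_UNIV[OF assms] by (auto simp: le_less)
  then have "gamma V E \<le> card V - 1"
    unfolding gamma_def by (metis card_atLeastLessThan card_mono finite_atLeastLessThan)
  moreover have "card V > 0"
    using assms by (simp add: card_gt_0_iff)
  ultimately show ?thesis
    by linarith
qed

lemma minor_path_shifted: "minor (gen_laplacian path_adj) {0..<i} {1..<i+1} = (-1) ^ i"
proof -
  let ?A = "mat i i (\<lambda>(k, l). gen_laplacian path_adj k (l + 1))"
  have "minor (gen_laplacian path_adj) {0..<i} {1..<i+1} = det ?A"
    unfolding minor_def
    by (intro arg_cong[where f = det] eq_matI) (auto simp: nth_upt simp del: upt_Suc)
  also have "\<dots> = prod_list (diag_mat ?A)"
    by (rule det_lower_triangular[of i]) (auto simp: gen_laplacian_def path_adj_def)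
  also have "diag_mat ?A = replicate i (-1)"
    by (rule nth_equalityI) (auto simp: diag_mat_def gen_laplacian_def path_adj_def)
  finally show ?thesis
    by simp
qed

lemma crit_ideal_path_eq_UNIV:
  assumes "1 \<le> i" "i < m"
  shows "crit_ideal (path_vertices m) path_adj i = UNIV"
  unfolding crit_ideal_def
proof (rule gen_ideal_eq_UNIV_if_unit)
  show "minor (gen_laplacian path_adj) {0..<i} {1..<i+1}
      \<in> {minor (gen_laplacian path_adj) R C | R C. R \<subseteq> path_vertices m \<and>
            C \<subseteq> path_vertices m \<and> card R = i \<and> card C = i}"
  proof -
    have "{0..<i} \<subseteq> path_vertices m" "{1..<i+1} \<subseteq> path_vertices m"
      using assms by (auto simp: path_vertices_def)
    moreover have "card {0..<i} = i" "card {1..<i+1} = i"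
      by simp_all
    ultimately show ?thesis
      by blast
  qed
  show "minor (gen_laplacian path_adj) {0..<i} {1..<i+1} dvd 1"
    unfolding minor_path_shifted by (metis dvdI minus_one_mult_self)
qed

lemma gamma_path: "gamma (path_vertices (Suc n)) path_adj = n"
proof -
  let ?V = "path_vertices (Suc n)"
  have "{i \<in> {1..card ?V}. crit_ideal ?V path_adj i = UNIV} = {1..n}"
    using crit_ideal_path_eq_UNIV[of _ "Suc n"]
      crit_ideal_card_ne_UNIV[of ?V path_adj]
    by (auto simp: path_vertices_def le_Suc_eq)
  then show ?thesis
    by (simp add: gamma_def)
qed

theorem theorem5p1:
  fixes n :: nat
  shows "gamma (path_vertices (n + 2)) path_adj = n + 1 \<and>
    (\<forall>v \<in> path_vertices (n + 2).
       gamma (path_vertices (n + 2) - {v}) path_adj < gamma (path_vertices (n + 2)) path_adj)"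
proof -
  let ?V = "path_vertices (n + 2)"
  have gamma_V: "gamma ?V path_adj = n + 1"
    using gamma_path[of "n + 1"] by simp
  have "gamma (?V - {v}) path_adj < n + 1" if "v \<in> ?V" for v
  proof -
    have card: "card (?V - {v}) = n + 1"
      using that by (simp add: path_vertices_def)
    then have "?V - {v} \<noteq> {}"
      by (metis card.empty add_is_0 one_neq_zero)
    with card show ?thesis
      using gamma_less_card[of "?V - {v}" path_adj] by (simp add: path_vertices_def)
  qed
  with gamma_V show ?thesis
    by simp
qed

end
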